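(* For an $E$-linear code $C$ of length $2n$, $$(SHull(C))_{Res}\subseteq SHull(C_{Res})\quad\text{and}\quad (SHull(C))_{Tor}\supseteq SHull(C_{Tor}).$$ Moreover, both inclusions are equalities if $C$ is free.
   Context: $E=\langle \kappa,\tau \mid 2\kappa=2\tau=0,\ \kappa^2=\kappa,\ \tau^2=\tau,\ \kappa\tau=\kappa,\ \tau\kappa=\tau\rangle$ is the non-unital ring $\{0,\kappa,\tau,\zeta\}$, $\zeta=\kappa+\tau$, with $e\kappa=e\tau=e$, $e\zeta=0$ for all $e\in E$. Every $e\in E$ is uniquely $u\kappa+v\zeta$ ($u,v\in\mathbb{F}_2$); $\pi(u\kappa+v\zeta)=u$, componentwise. An $E$-linear code of length $2n$ is a left $E$-submodule $C\subseteq E^{2n}$; $C_{Res}=\pi(C)$, $C_{Tor}=\{v\in\mathbb{F}_2^{2n}:\zeta v\in C\}$ (componentwise, $0\cdot\zeta=0,1\cdot\zeta=\zeta$); $C$ is free if $C_{Res}=C_{Tor}$. Symplectic inner product (over $E$ or $\mathbb{F}_2$): $\langle (u|v),(u'|v')\rangle_s=\sum_i u_iv'_i+\sum_i v_iu'_i$. For binary $B$: $B^{\perp_S}=\{z:\langle z,w\rangle_s=0\ \forall w\in B\}$, $SHull(B)=B\cap B^{\perp_S}$. For $E$-linear $C$: $C^{\perp_S}=\{z\in E^{2n}:\langle z,w\rangle_s=\langle w,z\rangle_s=0\ \forall w\in C\}$ and $SHull(C)=C\cap C^{\perp_S}$. *)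

theory Defs
  imports Main "HOL-Library.Z2" "HOL-Library.Product_Plus"
begin

text \<open>Every element is uniquely u*kappa + v*zeta
  with u, v in F2; we represent it by the pair (u, v). Addition is componentwise
  (F2-vector space with basis kappa, zeta).\<close>

type_synonym E = "bit \<times> bit"

definition kappa :: E where "kappa = (1, 0)"
definition zeta :: E where "zeta = (0, 1)"
definition tau :: E where "tau = (1, 1)"

text \<open>Multiplication: e*kappa = e*tau = e, e*zeta = 0, e*0 = 0; i.e. e*(u kappa + v zeta) = u e.\<close>
definition emul :: "E \<Rightarrow> E \<Rightarrow> E" where
  "emul e f = (if fst f = 1 then e else 0)"

definition epi :: "E \<Rightarrow> bit" where "epi e = fst e"

text \<open>Vectors of length m are functions on nat vanishing from index m on.\<close>
definition vecs :: "nat \<Rightarrow> (nat \<Rightarrow> 'a::zero) set" where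
  "vecs m = {x. \<forall>i\<ge>m. x i = 0}"

definition E_code :: "nat \<Rightarrow> (nat \<Rightarrow> E) set \<Rightarrow> bool" where
  "E_code n C \<longleftrightarrow> C \<subseteq> vecs (2*n) \<and> (\<lambda>i. 0) \<in> C
     \<and> (\<forall>x\<in>C. \<forall>y\<in>C. (\<lambda>i. x i + y i) \<in> C)
     \<and> (\<forall>e. \<forall>x\<in>C. (\<lambda>i. emul e (x i)) \<in> C)"

definition Res :: "(nat \<Rightarrow> E) set \<Rightarrow> (nat \<Rightarrow> bit) set" where
  "Res C = (\<lambda>x i. epi (x i)) ` C"

definition Tor :: "nat \<Rightarrow> (nat \<Rightarrow> E) set \<Rightarrow> (nat \<Rightarrow> bit) set" where
  "Tor n C = {v \<in> vecs (2*n). (\<lambda>i. if v i = 1 then zeta else 0) \<in> C}"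

definition free_code :: "nat \<Rightarrow> (nat \<Rightarrow> E) set \<Rightarrow> bool" where
  "free_code n C \<longleftrightarrow> Res C = Tor n C"

text \<open>Symplectic inner products for x = (u|v): u_i = x i, v_i = x (n+i).\<close>
definition symp_b :: "nat \<Rightarrow> (nat \<Rightarrow> bit) \<Rightarrow> (nat \<Rightarrow> bit) \<Rightarrow> bit" where
  "symp_b n x y = (\<Sum>i<n. x i * y (n+i)) + (\<Sum>i<n. x (n+i) * y i)"

definition symp_E :: "nat \<Rightarrow> (nat \<Rightarrow> E) \<Rightarrow> (nat \<Rightarrow> E) \<Rightarrow> E" where
  "symp_E n x y = (\<Sum>i<n. emul (x i) (y (n+i))) + (\<Sum>i<n. emul (x (n+i)) (y i))"

definition SHull_b :: "nat \<Rightarrow> (nat \<Rightarrow> bit) set \<Rightarrow> (nat \<Rightarrow> bit) set" where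
  "SHull_b n B = B \<inter> {z \<in> vecs (2*n). \<forall>w\<in>B. symp_b n z w = 0}"

definition SHull_E :: "nat \<Rightarrow> (nat \<Rightarrow> E) set \<Rightarrow> (nat \<Rightarrow> E) set" where
  "SHull_E n C = C \<inter> {z \<in> vecs (2*n). \<forall>w\<in>C. symp_E n z w = 0 \<and> symp_E n w z = 0}"

end

theory Submission
  imports Defs
begin

text \<open>Write a vector over E as x = u \<kappa> + v \<zeta> with binary vectors u = \<pi>(x) and v.
  Since e f only depends on \<pi>(f), the symplectic form splits as
  \<langle>x, y\<rangle>_s = \<langle>u, \<pi> y\<rangle>_s \<kappa> + \<langle>v, \<pi> y\<rangle>_s \<zeta>. Hence \<pi> maps SHull(C) into SHull(C_Res),
  and for v in SHull(C_Tor) the word \<zeta> v is orthogonal to C from both sides, since this only tests v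
  against \<pi>(C) \<subseteq> C_Tor. Moreover the \<zeta>-part of every codeword w lies in C_Tor, because
  \<zeta> (\<zeta>-part of w) = w + \<kappa> w. So if C_Tor = C_Res and \<pi>(w) \<in> SHull(C_Res), then \<kappa> w lies
  in SHull(C); the reverse torsion inclusion only needs C_Tor \<subseteq> C_Res.\<close>

definition kappa_part :: "(nat \<Rightarrow> E) \<Rightarrow> nat \<Rightarrow> bit" where
  "kappa_part x = (\<lambda>i. fst (x i))"

definition zeta_part :: "(nat \<Rightarrow> E) \<Rightarrow> nat \<Rightarrow> bit" where
  "zeta_part x = (\<lambda>i. snd (x i))"

definition zeta_vec :: "(nat \<Rightarrow> bit) \<Rightarrow> nat \<Rightarrow> E" where
  "zeta_vec v = (\<lambda>i. if v i = 1 then zeta else 0)"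

definition emul_vec :: "E \<Rightarrow> (nat \<Rightarrow> E) \<Rightarrow> nat \<Rightarrow> E" where
  "emul_vec e x = (\<lambda>i. emul e (x i))"

lemma fst_emul [simp]: "fst (emul e f) = fst e * fst f"
  by (simp add: emul_def)

lemma snd_emul [simp]: "snd (emul e f) = snd e * fst f"
  by (simp add: emul_def)

lemma kappa_part_zeta_vec [simp]: "kappa_part (zeta_vec v) = (\<lambda>i. 0)"
  by (rule ext) (simp add: kappa_part_def zeta_vec_def zeta_def)

lemma zeta_part_zeta_vec [simp]: "zeta_part (zeta_vec v) = v"
  by (rule ext) (simp add: zeta_part_def zeta_vec_def zeta_def)

lemma kappa_part_emul_kappa [simp]: "kappa_part (emul_vec kappa x) = kappa_part x"
  by (rule ext) (simp add: kappa_part_def emul_vec_def kappa_def)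

lemma zeta_part_emul_kappa [simp]: "zeta_part (emul_vec kappa x) = (\<lambda>i. 0)"
  by (simp add: zeta_part_def emul_vec_def kappa_def)

lemma emul_zeta_eq_zeta_vec: "emul_vec zeta x = zeta_vec (kappa_part x)"
  by (auto simp: emul_vec_def zeta_vec_def kappa_part_def emul_def)

lemma add_emul_kappa_eq_zeta_vec: "(\<lambda>i. x i + emul_vec kappa x i) = zeta_vec (zeta_part x)"
  by (rule ext) (auto simp: emul_vec_def zeta_vec_def zeta_part_def kappa_def zeta_def prod_eq_iff)

lemma Res_eq_image_kappa_part: "Res C = kappa_part ` C"
  by (simp add: Res_def epi_def kappa_part_def)

lemma kappa_part_in_vecs: "x \<in> vecs m \<Longrightarrow> kappa_part x \<in> vecs m"
  by (simp add: vecs_def kappa_part_def)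

lemma zeta_vec_in_vecs_iff: "zeta_vec v \<in> vecs m \<longleftrightarrow> v \<in> vecs m"
  by (auto simp: vecs_def zeta_vec_def zeta_def zero_prod_def)

lemma emul_vec_in_vecs: "x \<in> vecs m \<Longrightarrow> emul_vec e x \<in> vecs m"
  by (simp add: vecs_def emul_vec_def emul_def)

lemma mem_Tor_iff: "v \<in> Tor n C \<longleftrightarrow> v \<in> vecs (2 * n) \<and> zeta_vec v \<in> C"
  by (simp add: Tor_def zeta_vec_def)

lemma symp_b_commute: "symp_b n x y = symp_b n y x"
  unfolding symp_b_def by (simp only: mult.commute[of "x _"] add.commute)

lemma symp_b_zero_left [simp]: "symp_b n (\<lambda>i. 0) y = 0"
  by (simp add: symp_b_def)

lemma symp_b_zero_right [simp]: "symp_b n x (\<lambda>i. 0) = 0"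
  by (simp add: symp_b_def)

lemma fst_symp_E: "fst (symp_E n x y) = symp_b n (kappa_part x) (kappa_part y)"
  unfolding symp_E_def symp_b_def kappa_part_def fst_add fst_sum fst_emul ..

lemma snd_symp_E: "snd (symp_E n x y) = symp_b n (zeta_part x) (kappa_part y)"
  unfolding symp_E_def symp_b_def kappa_part_def zeta_part_def snd_add snd_sum snd_emul ..

lemma symp_E_eq_0_iff:
  "symp_E n x y = 0 \<longleftrightarrow>
     symp_b n (kappa_part x) (kappa_part y) = 0 \<and> symp_b n (zeta_part x) (kappa_part y) = 0"
  by (simp add: prod_eq_iff fst_symp_E snd_symp_E)

lemma E_code_emul_vec: "E_code n C \<Longrightarrow> x \<in> C \<Longrightarrow> emul_vec e x \<in> C"
  unfolding E_code_def emul_vec_def by blast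

lemma E_code_add: "E_code n C \<Longrightarrow> x \<in> C \<Longrightarrow> y \<in> C \<Longrightarrow> (\<lambda>i. x i + y i) \<in> C"
  unfolding E_code_def by blast

lemma E_code_in_vecs: "E_code n C \<Longrightarrow> x \<in> C \<Longrightarrow> x \<in> vecs (2 * n)"
  unfolding E_code_def by blast

lemma Res_subset_Tor:
  assumes "E_code n C"
  shows "Res C \<subseteq> Tor n C"
proof
  fix u assume "u \<in> Res C"
  then obtain w where w: "w \<in> C" and u: "u = kappa_part w"
    by (auto simp: Res_eq_image_kappa_part)
  have "zeta_vec u \<in> C"
    using E_code_emul_vec[OF assms w, of zeta] by (simp add: u emul_zeta_eq_zeta_vec)
  with u kappa_part_in_vecs E_code_in_vecs[OF assms w] show "u \<in> Tor n C"
    by (simp add: mem_Tor_iff)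
qed

lemma zeta_part_in_Tor:
  assumes "E_code n C" and w: "w \<in> C"
  shows "zeta_part w \<in> Tor n C"
proof -
  have "zeta_vec (zeta_part w) \<in> C"
    using E_code_add[OF assms E_code_emul_vec[OF assms], of kappa]
    by (simp add: add_emul_kappa_eq_zeta_vec)
  moreover have "zeta_part w \<in> vecs (2 * n)"
    using E_code_in_vecs[OF assms] by (simp add: vecs_def zeta_part_def)
  ultimately show ?thesis
    by (simp add: mem_Tor_iff)
qed

lemma Res_SHull_E_subset: "Res (SHull_E n C) \<subseteq> SHull_b n (Res C)"
proof
  fix u assume "u \<in> Res (SHull_E n C)"
  then obtain z where z: "z \<in> C" "z \<in> vecs (2 * n)" "\<forall>w\<in>C. symp_E n z w = 0"
    and u: "u = kappa_part z"
    by (auto simp: Res_eq_image_kappa_part SHull_E_def)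
  have "\<forall>y\<in>Res C. symp_b n u y = 0"
    using z(3) by (auto simp: Res_eq_image_kappa_part u symp_E_eq_0_iff)
  with z u show "u \<in> SHull_b n (Res C)"
    by (simp add: SHull_b_def Res_eq_image_kappa_part kappa_part_in_vecs)
qed

lemma SHull_b_Tor_subset:
  assumes C: "E_code n C"
  shows "SHull_b n (Tor n C) \<subseteq> Tor n (SHull_E n C)"
proof
  fix v assume v: "v \<in> SHull_b n (Tor n C)"
  then have vecs: "v \<in> vecs (2 * n)" and in_C: "zeta_vec v \<in> C"
    and orth: "\<forall>y\<in>Tor n C. symp_b n v y = 0"
    by (auto simp: SHull_b_def mem_Tor_iff)
  have "symp_b n v (kappa_part w) = 0" if "w \<in> C" for w
    using orth Res_subset_Tor[OF C] that by (auto simp: Res_eq_image_kappa_part)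
  then have "\<forall>w\<in>C. symp_E n (zeta_vec v) w = 0 \<and> symp_E n w (zeta_vec v) = 0"
    by (simp add: symp_E_eq_0_iff)
  with vecs in_C show "v \<in> Tor n (SHull_E n C)"
    by (simp add: mem_Tor_iff SHull_E_def zeta_vec_in_vecs_iff)
qed

lemma SHull_b_Res_subset:
  assumes C: "E_code n C" and Tor_Res: "Tor n C \<subseteq> Res C"
  shows "SHull_b n (Res C) \<subseteq> Res (SHull_E n C)"
proof
  fix u assume "u \<in> SHull_b n (Res C)"
  then obtain w0 where w0: "w0 \<in> C" and u: "u = kappa_part w0"
    and orth: "\<forall>y\<in>Res C. symp_b n u y = 0"
    by (auto simp: SHull_b_def Res_eq_image_kappa_part)
  define z where "z = emul_vec kappa w0"
  have "symp_b n u (kappa_part w) = 0 \<and> symp_b n u (zeta_part w) = 0" if "w \<in> C" for w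
    using orth zeta_part_in_Tor[OF C that] Tor_Res that
    by (auto simp: Res_eq_image_kappa_part)
  then have "\<forall>w\<in>C. symp_E n z w = 0 \<and> symp_E n w z = 0"
    by (simp add: symp_E_eq_0_iff z_def u[symmetric] symp_b_commute[of n u])
  moreover have "z \<in> C" "z \<in> vecs (2 * n)"
    using w0 E_code_emul_vec[OF C] E_code_in_vecs[OF C] emul_vec_in_vecs by (auto simp: z_def)
  ultimately have "z \<in> SHull_E n C"
    by (simp add: SHull_E_def)
  then show "u \<in> Res (SHull_E n C)"
    by (auto simp: Res_eq_image_kappa_part u z_def intro: rev_image_eqI)
qed

lemma Tor_SHull_E_subset:
  assumes Tor_Res: "Tor n C \<subseteq> Res C"
  shows "Tor n (SHull_E n C) \<subseteq> SHull_b n (Tor n C)"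
proof
  fix v assume "v \<in> Tor n (SHull_E n C)"
  then have vecs: "v \<in> vecs (2 * n)" and in_C: "zeta_vec v \<in> C"
    and orth: "\<forall>w\<in>C. symp_E n (zeta_vec v) w = 0"
    by (auto simp: mem_Tor_iff SHull_E_def)
  have "\<forall>y\<in>Tor n C. symp_b n v y = 0"
    using orth Tor_Res by (auto simp: Res_eq_image_kappa_part symp_E_eq_0_iff)
  with vecs in_C show "v \<in> SHull_b n (Tor n C)"
    by (simp add: SHull_b_def mem_Tor_iff)
qed

theorem mainTheorem8:
  fixes n :: nat and C :: "(nat \<Rightarrow> E) set"
  assumes "E_code n C"
  shows "Res (SHull_E n C) \<subseteq> SHull_b n (Res C)
       \<and> SHull_b n (Tor n C) \<subseteq> Tor n (SHull_E n C)
       \<and> (free_code n C \<longrightarrow>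
            Res (SHull_E n C) = SHull_b n (Res C) \<and> Tor n (SHull_E n C) = SHull_b n (Tor n C))"
proof (intro conjI impI)
  show "Res (SHull_E n C) \<subseteq> SHull_b n (Res C)"
    by (rule Res_SHull_E_subset)
  show "SHull_b n (Tor n C) \<subseteq> Tor n (SHull_E n C)"
    using assms by (rule SHull_b_Tor_subset)
  assume "free_code n C"
  then have "Tor n C \<subseteq> Res C"
    by (simp add: free_code_def)
  with assms show "Res (SHull_E n C) = SHull_b n (Res C)"
    "Tor n (SHull_E n C) = SHull_b n (Tor n C)"
    using Res_SHull_E_subset SHull_b_Tor_subset SHull_b_Res_subset Tor_SHull_E_subset
    by (blast intro: equalityI)+
qed

end
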